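(* Let $p$ be a design and let $\Omega\subseteq\{0,1\}^n$ be the set of treatment vectors it assigns positive probability, $m=|\Omega|$. Each unit $i$ has exposure levels $\{0,\dots,K_i-1\}$ given by $e_i=f(\mathbf z_{N_i})$ and potential outcomes $Y_i(z,e)$. Fix $(z_1,e_1)\ne(z_0,e_0)$ and let $\theta=\frac1n\sum_i\big(Y_i(z_1,e_1)-Y_i(z_0,e_0)\big)$, and $\pi_i(z,e)=P(Z_i=z,f(\mathbf Z_{N_i})=e)$. If for each $i$ we have $m>2K_i$ and $0<\pi_i(z_1,e_1)<1$, $0<\pi_i(z_0,e_0)<1$, then there are infinitely many estimators of the form $\hat\theta=\sum_iw_i(\mathbf Z)Y_i^{obs}$, with weight functions $w_i:\Omega\to\mathbb R$, that satisfy $\mathbb E[\hat\theta]=\theta$ for every choice of the real numbers $\{Y_i(z,e)\}$.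
   Context: Units $1,\dots,n$ each have an interference neighborhood $N_i\subseteq\{1,\dots,n\}\setminus\{i\}$ and exposure function $f$ mapping $\{0,1\}^{N_i}$ onto $\{0,\dots,K_i-1\}$. The observed outcome is $Y_i^{obs}=Y_i(Z_i,f(\mathbf Z_{N_i}))$. *)

theory Defs
  imports Complex_Main
begin

text \<open>Units are 0,...,n-1. A treatment vector in {0,1}^n is a function
 nat => bool that is False outside {..<n}.\<close>
definition treatments :: "nat \<Rightarrow> (nat \<Rightarrow> bool) set" where
  "treatments n = {z. \<forall>i. n \<le> i \<longrightarrow> \<not> z i}"

definition is_design :: "nat \<Rightarrow> ((nat \<Rightarrow> bool) \<Rightarrow> real) \<Rightarrow> bool" where
  "is_design n p \<longleftrightarrow> (\<forall>z\<in>treatments n. 0 \<le> p z) \<and> (\<Sum>z\<in>treatments n. p z) = 1"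

definition support :: "nat \<Rightarrow> ((nat \<Rightarrow> bool) \<Rightarrow> real) \<Rightarrow> (nat \<Rightarrow> bool) set" where
  "support n p = {z \<in> treatments n. 0 < p z}"

definition exposure_mapping ::
  "nat \<Rightarrow> (nat \<Rightarrow> nat set) \<Rightarrow> nat \<Rightarrow> ((nat \<Rightarrow> bool) \<Rightarrow> nat) \<Rightarrow> nat \<Rightarrow> bool" where
  "exposure_mapping n N i fi Ki \<longleftrightarrow>
     N i \<subseteq> {..<n} - {i} \<and>
     (\<forall>z z'. (\<forall>j\<in>N i. z j = z' j) \<longrightarrow> fi z = fi z') \<and>
     fi ` treatments n = {..<Ki}"

definition expo_prob ::
  "nat \<Rightarrow> ((nat \<Rightarrow> bool) \<Rightarrow> real) \<Rightarrow> (nat \<Rightarrow> (nat \<Rightarrow> bool) \<Rightarrow> nat) \<Rightarrow> nat \<Rightarrow> bool \<Rightarrow> nat \<Rightarrow> real" where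
  "expo_prob n p f i a e = (\<Sum>z\<in>{z\<in>support n p. z i = a \<and> f i z = e}. p z)"

definition Yobs :: "(nat \<Rightarrow> bool \<Rightarrow> nat \<Rightarrow> real) \<Rightarrow> (nat \<Rightarrow> (nat \<Rightarrow> bool) \<Rightarrow> nat) \<Rightarrow> nat \<Rightarrow> (nat \<Rightarrow> bool) \<Rightarrow> real" where
  "Yobs Y f i z = Y i (z i) (f i z)"

definition est_expect ::
  "nat \<Rightarrow> ((nat \<Rightarrow> bool) \<Rightarrow> real) \<Rightarrow> (nat \<Rightarrow> (nat \<Rightarrow> bool) \<Rightarrow> nat) \<Rightarrow> (nat \<Rightarrow> (nat \<Rightarrow> bool) \<Rightarrow> real)
    \<Rightarrow> (nat \<Rightarrow> bool \<Rightarrow> nat \<Rightarrow> real) \<Rightarrow> real" where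
  "est_expect n p f w Y = (\<Sum>z\<in>support n p. p z * (\<Sum>i<n. w i z * Yobs Y f i z))"

definition estimand :: "nat \<Rightarrow> (nat \<Rightarrow> bool \<Rightarrow> nat \<Rightarrow> real) \<Rightarrow> bool \<Rightarrow> nat \<Rightarrow> bool \<Rightarrow> nat \<Rightarrow> real" where
  "estimand n Y z1 e1 z0 e0 = (1 / real n) * (\<Sum>i<n. Y i z1 e1 - Y i z0 e0)"

end

theory Submission
  imports Defs
begin

text \<open>The Horvitz-Thompson weights, \<open>1 / (n \<pi>\<^sub>i(z\<^sub>1,e\<^sub>1))\<close> on the assignments putting unit
  \<open>i\<close> in cell \<open>(z\<^sub>1,e\<^sub>1)\<close> minus \<open>1 / (n \<pi>\<^sub>i(z\<^sub>0,e\<^sub>0))\<close> on those putting it in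
  \<open>(z\<^sub>0,e\<^sub>0)\<close>, give an unbiased estimator. Unit 0 can only tell apart \<open>2 K\<^sub>0\<close> pairs
  \<open>(z\<^sub>0, f\<^sub>0 z)\<close>, so by pigeonhole two support points \<open>u \<noteq> v\<close> give it the same
  treatment and exposure. Adding weight \<open>t / p u\<close> at \<open>u\<close> and \<open>-t / p v\<close> at \<open>v\<close> for
  unit 0 changes the expectation by \<open>t (Y\<^sub>0(u) - Y\<^sub>0(v)) = 0\<close>, so every real \<open>t\<close>
  gives another unbiased estimator.\<close>

lemma finite_treatments: "finite (treatments n)"
proof (rule finite_subset)
  show "treatments n \<subseteq> (\<lambda>A i. i \<in> A) ` Pow {..<n}"
  proof
    fix z assume "z \<in> treatments n"
    then have "{i. z i} \<in> Pow {..<n}"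
      by (auto simp: treatments_def not_less[symmetric])
    then show "z \<in> (\<lambda>A i. i \<in> A) ` Pow {..<n}"
      by (intro image_eqI[of _ _ "{i. z i}"]) auto
  qed
qed simp

lemma finite_support: "finite (support n p)"
  using finite_treatments by (simp add: support_def)

lemma sum_mult_cell_indicator:
  fixes p :: "'a \<Rightarrow> real"
  assumes "finite S"
  shows "(\<Sum>z\<in>S. p z * (if g z = a then c else 0) * Y (g z))
       = c * Y a * (\<Sum>z\<in>{z\<in>S. g z = a}. p z)"
proof -
  have "(\<Sum>z\<in>S. p z * (if g z = a then c else 0) * Y (g z))
      = (\<Sum>z\<in>S. if g z = a then c * Y a * p z else 0)"
    by (rule sum.cong) auto
  also have "\<dots> = (\<Sum>z\<in>{z\<in>S. g z = a}. c * Y a * p z)"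
    using assms by (simp add: sum.inter_filter)
  also have "\<dots> = c * Y a * (\<Sum>z\<in>{z\<in>S. g z = a}. p z)"
    by (simp add: sum_distrib_left)
  finally show ?thesis .
qed

lemma est_expect_add_scaled:
  "est_expect n p f (\<lambda>i z. w i z + t * d i z) Y
     = est_expect n p f w Y + t * est_expect n p f d Y"
  unfolding est_expect_def
  by (simp add: algebra_simps sum.distrib sum_distrib_left)

lemma infinite_if_contains_line:
  fixes d :: "'a \<Rightarrow> 'b \<Rightarrow> real"
  assumes "d i z \<noteq> 0" and "\<And>t. (\<lambda>i z. w i z + t * d i z) \<in> A"
  shows "infinite A"
proof -
  let ?line = "\<lambda>t i z. w i z + t * d i z"
  have "inj ?line"
  proof (rule injI)
    fix s t assume "?line s = ?line t"
    then have "s * d i z = t * d i z"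
      by (metis add_left_cancel)
    then show "s = t"
      using assms(1) by simp
  qed
  then have "infinite (range ?line)"
    using infinite_UNIV_char_0 finite_imageD by blast
  moreover have "range ?line \<subseteq> A"
    using assms(2) by blast
  ultimately show ?thesis
    using infinite_super by blast
qed

definition ht_weights ::
  "nat \<Rightarrow> ((nat \<Rightarrow> bool) \<Rightarrow> real) \<Rightarrow> (nat \<Rightarrow> (nat \<Rightarrow> bool) \<Rightarrow> nat)
    \<Rightarrow> bool \<Rightarrow> nat \<Rightarrow> bool \<Rightarrow> nat \<Rightarrow> nat \<Rightarrow> (nat \<Rightarrow> bool) \<Rightarrow> real" where
  "ht_weights n p f z1 e1 z0 e0 i z =
     (if i < n \<and> z \<in> support n p then
        (if (z i, f i z) = (z1, e1) then 1 / (real n * expo_prob n p f i z1 e1) else 0)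
      - (if (z i, f i z) = (z0, e0) then 1 / (real n * expo_prob n p f i z0 e0) else 0)
      else 0)"

lemma est_expect_ht_weights:
  assumes "0 < n"
    and "\<And>i. i < n \<Longrightarrow> expo_prob n p f i z1 e1 \<noteq> 0"
    and "\<And>i. i < n \<Longrightarrow> expo_prob n p f i z0 e0 \<noteq> 0"
  shows "est_expect n p f (ht_weights n p f z1 e1 z0 e0) Y = estimand n Y z1 e1 z0 e0"
proof -
  let ?S = "support n p" and ?w = "ht_weights n p f z1 e1 z0 e0"
  have unit_term: "(\<Sum>z\<in>?S. p z * ?w i z * Y i (z i) (f i z)) = (Y i z1 e1 - Y i z0 e0) / real n"
    if "i < n" for i
  proof -
    let ?cell = "\<lambda>z. (z i, f i z)" and ?Y = "case_prod (Y i)"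
    let ?c1 = "1 / (real n * expo_prob n p f i z1 e1)" and ?c0 = "1 / (real n * expo_prob n p f i z0 e0)"
    have "(\<Sum>z\<in>?S. p z * ?w i z * Y i (z i) (f i z))
        = (\<Sum>z\<in>?S. p z * (if ?cell z = (z1, e1) then ?c1 else 0) * ?Y (?cell z))
        - (\<Sum>z\<in>?S. p z * (if ?cell z = (z0, e0) then ?c0 else 0) * ?Y (?cell z))"
      unfolding sum_subtractf[symmetric]
      by (rule sum.cong) (use that in \<open>auto simp: ht_weights_def algebra_simps\<close>)
    also have "\<dots> = ?c1 * Y i z1 e1 * expo_prob n p f i z1 e1 - ?c0 * Y i z0 e0 * expo_prob n p f i z0 e0"
      using sum_mult_cell_indicator[OF finite_support, of p ?cell "(z1, e1)" ?c1 ?Y]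
        sum_mult_cell_indicator[OF finite_support, of p ?cell "(z0, e0)" ?c0 ?Y]
      by (simp add: expo_prob_def)
    also have "\<dots> = (Y i z1 e1 - Y i z0 e0) / real n"
      using assms that by (simp add: field_simps)
    finally show ?thesis .
  qed
  have "est_expect n p f ?w Y = (\<Sum>i<n. \<Sum>z\<in>?S. p z * ?w i z * Y i (z i) (f i z))"
    unfolding est_expect_def Yobs_def
    by (subst sum.swap) (simp add: sum_distrib_left mult.assoc)
  also have "\<dots> = (\<Sum>i<n. (Y i z1 e1 - Y i z0 e0) / real n)"
    by (rule sum.cong) (simp_all add: unit_term)
  also have "\<dots> = estimand n Y z1 e1 z0 e0"
    by (simp add: estimand_def sum_divide_distrib)
  finally show ?thesis .
qed

lemma ht_weights_outside:
  assumes "n \<le> i \<or> z \<notin> support n p"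
  shows "ht_weights n p f z1 e1 z0 e0 i z = 0"
  unfolding ht_weights_def by (rule if_not_P) (use assms in auto)

lemma exposure_collision:
  assumes "exposure_mapping n N i fi Ki" and "card (support n p) > 2 * Ki"
  obtains u v where "u \<in> support n p" "v \<in> support n p" "u \<noteq> v" "u i = v i" "fi u = fi v"
proof -
  let ?cell = "\<lambda>z. (z i, fi z)"
  have "?cell ` support n p \<subseteq> UNIV \<times> {..<Ki}"
    using assms(1) by (auto simp: exposure_mapping_def support_def)
  moreover have "card (UNIV \<times> {..<Ki} :: (bool \<times> nat) set) = 2 * Ki"
    by (simp add: card_cartesian_product)
  ultimately have "\<not> inj_on ?cell (support n p)"
    using assms(2) card_inj_on_le[of ?cell "support n p" "UNIV \<times> {..<Ki}"] by auto
  then show ?thesis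
    using that unfolding inj_on_def by blast
qed

definition collision_weights ::
  "((nat \<Rightarrow> bool) \<Rightarrow> real) \<Rightarrow> nat \<Rightarrow> (nat \<Rightarrow> bool) \<Rightarrow> (nat \<Rightarrow> bool) \<Rightarrow> nat \<Rightarrow> (nat \<Rightarrow> bool) \<Rightarrow> real" where
  "collision_weights p i u v j z =
     (if j = i then (if z = u then 1 / p u else 0) - (if z = v then 1 / p v else 0) else 0)"

lemma est_expect_collision_weights:
  assumes "i < n" and "u \<in> support n p" "v \<in> support n p"
    and "u i = v i" "f i u = f i v"
  shows "est_expect n p f (collision_weights p i u v) Y = 0"
proof -
  have pos: "p u > 0" "p v > 0"
    using assms(2,3) by (auto simp: support_def)
  have unit_i: "(\<Sum>j<n. collision_weights p i u v j z * Yobs Y f j z)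
      = ((if z = u then 1 / p u else 0) - (if z = v then 1 / p v else 0)) * Yobs Y f i z" for z
  proof -
    have "(\<Sum>j<n. collision_weights p i u v j z * Yobs Y f j z)
        = (\<Sum>j<n. if j = i then collision_weights p i u v i z * Yobs Y f i z else 0)"
      by (rule sum.cong) (auto simp: collision_weights_def)
    then show ?thesis
      using assms(1) by (simp add: collision_weights_def)
  qed
  have "est_expect n p f (collision_weights p i u v) Y
      = (\<Sum>z\<in>support n p. (if z = u then Yobs Y f i u else 0) - (if z = v then Yobs Y f i v else 0))"
    unfolding est_expect_def unit_i
    by (rule sum.cong) (use pos in auto)
  also have "\<dots> = 0"
    using assms by (simp add: sum_subtractf finite_support Yobs_def)
  finally show ?thesis .
qed

lemma collision_weights_outside:
  assumes "i < n" "u \<in> support n p" "v \<in> support n p" and "n \<le> j \<or> z \<notin> support n p"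
  shows "collision_weights p i u v j z = 0"
proof -
  have "j \<noteq> i \<or> (z \<noteq> u \<and> z \<noteq> v)"
    using assms by auto
  then show ?thesis
    by (auto simp: collision_weights_def)
qed

theorem proposition17:
  fixes n :: nat and p :: "(nat \<Rightarrow> bool) \<Rightarrow> real"
    and N :: "nat \<Rightarrow> nat set" and f :: "nat \<Rightarrow> (nat \<Rightarrow> bool) \<Rightarrow> nat" and K :: "nat \<Rightarrow> nat"
    and z1 z0 :: bool and e1 e0 :: nat
  assumes "0 < n"
    and "is_design n p"
    and "\<And>i. i < n \<Longrightarrow> exposure_mapping n N i (f i) (K i)"
    and "(z1, e1) \<noteq> (z0, e0)"
    and "\<And>i. i < n \<Longrightarrow> card (support n p) > 2 * K i"
    and "\<And>i. i < n \<Longrightarrow> 0 < expo_prob n p f i z1 e1 \<and> expo_prob n p f i z1 e1 < 1"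
    and "\<And>i. i < n \<Longrightarrow> 0 < expo_prob n p f i z0 e0 \<and> expo_prob n p f i z0 e0 < 1"
  shows "infinite {w :: nat \<Rightarrow> (nat \<Rightarrow> bool) \<Rightarrow> real.
            (\<forall>i z. (n \<le> i \<or> z \<notin> support n p) \<longrightarrow> w i z = 0) \<and>
            (\<forall>Y. est_expect n p f w Y = estimand n Y z1 e1 z0 e0)}"
    (is "infinite ?unbiased")
proof -
  obtain u v where uv: "u \<in> support n p" "v \<in> support n p" "u \<noteq> v" "u 0 = v 0" "f 0 u = f 0 v"
    using exposure_collision[OF assms(3,5)[OF assms(1)]] .
  have ht_unbiased: "est_expect n p f (ht_weights n p f z1 e1 z0 e0) Y = estimand n Y z1 e1 z0 e0" for Y
    using assms(6,7) by (intro est_expect_ht_weights[OF assms(1)]) force+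
  have collision_null: "est_expect n p f (collision_weights p 0 u v) Y = 0" for Y
    using assms(1) uv by (intro est_expect_collision_weights) auto
  show ?thesis
  proof (rule infinite_if_contains_line[where w = "ht_weights n p f z1 e1 z0 e0"
        and d = "collision_weights p 0 u v" and i = 0 and z = u])
    show "collision_weights p 0 u v 0 u \<noteq> 0"
      using uv(1,3) by (simp add: collision_weights_def support_def)
    show "(\<lambda>i z. ht_weights n p f z1 e1 z0 e0 i z + t * collision_weights p 0 u v i z) \<in> ?unbiased"
      for t
      using assms(1) uv(1,2)
      by (simp add: est_expect_add_scaled ht_unbiased collision_null
          ht_weights_outside collision_weights_outside)
  qed
qed

end
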